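(* Let $A\in\mathbb{R}^{m\times n}$, $a\in\mathbb{R}^{1\times n}$, $c_A\in\mathbb{R}^m$, $c_a\in\mathbb{R}$, and let \[ P=\{x\in\mathbb{R}^n : Ax=c_A,\ ax=c_a,\ x\ge 0\},\qquad P_{\bar A}=\{(x,s)\in\mathbb{R}^n\times\mathbb{R} : Ax=c_A,\ ax+s=c_a,\ x\ge 0,\ s\ge 0\}. \] Then $d(P_{\bar A})\le d(A)+d(P)+2$.
   Context: The combinatorial diameter $d(P)$ of a polyhedron $P$ is the maximum, over all pairs of vertices, of the minimum number of edges in an edge walk in $P$ between them. For a matrix $M\in\mathbb{R}^{m\times n}$, $d(M):=\max\{d(\{x: Mx=r,\ x\ge 0\}) : r\in\mathbb{R}^m\}$. *)

theory Defs
  imports "HOL-Analysis.Analysis" "HOL-Library.Extended_Nat"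
begin

definition poly_vertices :: "'a::real_vector set \<Rightarrow> 'a set" where
  "poly_vertices P = {v. v extreme_point_of P}"

definition poly_adj :: "'a::real_vector set \<Rightarrow> 'a \<Rightarrow> 'a \<Rightarrow> bool" where
  "poly_adj P u v \<longleftrightarrow> u \<in> poly_vertices P \<and> v \<in> poly_vertices P \<and> u \<noteq> v
      \<and> closed_segment u v face_of P"

text \<open>Minimum number of edges in an edge walk from u to v (infinite if none).\<close>
definition walk_dist :: "'a::real_vector set \<Rightarrow> 'a \<Rightarrow> 'a \<Rightarrow> enat" where
  "walk_dist P u v = (INF k \<in> {k. \<exists>p. length p = Suc k \<and> hd p = u \<and> last p = v
        \<and> (\<forall>i<k. poly_adj P (p ! i) (p ! Suc i))}. enat k)"

text \<open>Combinatorial diameter (0 if there are no vertices).\<close>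
definition comb_diam :: "'a::real_vector set \<Rightarrow> enat" where
  "comb_diam P = (SUP uv \<in> poly_vertices P \<times> poly_vertices P. walk_dist P (fst uv) (snd uv))"

definition mat_diam :: "real^'n^'m \<Rightarrow> enat" where
  "mat_diam M = (SUP r \<in> (UNIV :: (real^'m) set).
      comb_diam {x :: real^'n. M *v x = r \<and> (\<forall>i. 0 \<le> x $ i)})"

end

theory Submission
  imports Defs
begin

(* The slack s is determined by x, so P_{\bar A} is an affine image of
   Q = {x. A x = c_A, x >= 0, a x <= c_a}. The vertices of Q are the vertices of
   P_A = {x. A x = c_A, x >= 0} strictly below the hyperplane a x = c_a, together with
   the vertices of the face P of Q. Along a shortest edge walk of P_A starting below the
   hyperplane, every edge stays in Q up to the first one leaving the halfspace, and the
   hyperplane cuts that edge in a vertex of P adjacent in Q. Hence two vertices below the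
   hyperplane are joined through P by at most d(P_A) + d(P) edges. A vertex v of P that
   is not a vertex of P_A lies inside an edge or ray of P_A meeting the hyperplane only
   in v; the endpoint w of that edge is a vertex of P_A either beyond the hyperplane
   (reached as before) or below it and adjacent to v in Q, at the cost of one more edge.
   So d(Q) <= d(P_A) + d(P) + 1, and d(P_A) <= d(A). *)

inductive walk :: "'a::real_vector set \<Rightarrow> nat \<Rightarrow> 'a \<Rightarrow> 'a \<Rightarrow> bool" for S where
  refl: "walk S 0 u u"
| step: "poly_adj S u v \<Longrightarrow> walk S k v w \<Longrightarrow> walk S (Suc k) u w"

lemma walk_iff_list:
  "walk S k u v \<longleftrightarrow>
     (\<exists>p. length p = Suc k \<and> hd p = u \<and> last p = v \<and> (\<forall>i<k. poly_adj S (p ! i) (p ! Suc i)))"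
proof
  assume "walk S k u v"
  then show "\<exists>p. length p = Suc k \<and> hd p = u \<and> last p = v \<and> (\<forall>i<k. poly_adj S (p ! i) (p ! Suc i))"
  proof (induction rule: walk.induct)
    case (refl u)
    show ?case by (intro exI[of _ "[u]"]) auto
  next
    case (step u v k w)
    then obtain p where p: "length p = Suc k" "hd p = v" "last p = w"
      "\<forall>i<k. poly_adj S (p ! i) (p ! Suc i)" by blast
    then have "p \<noteq> []" by auto
    with p have "p ! 0 = v" by (simp add: hd_conv_nth)
    with step.hyps p \<open>p \<noteq> []\<close> show ?case
      by (intro exI[of _ "u # p"]) (auto simp: nth_Cons split: nat.split)
  qed
next
  assume "\<exists>p. length p = Suc k \<and> hd p = u \<and> last p = v \<and> (\<forall>i<k. poly_adj S (p ! i) (p ! Suc i))"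
  then obtain p where "length p = Suc k" "hd p = u" "last p = v"
    "\<forall>i<k. poly_adj S (p ! i) (p ! Suc i)" by blast
  then show "walk S k u v"
  proof (induction k arbitrary: p u)
    case 0
    then show ?case by (cases p) (auto intro: walk.refl)
  next
    case (Suc k)
    from Suc.prems(1,2) obtain p' where p: "p = u # p'" "p' \<noteq> []" by (cases p) fastforce+
    with Suc.prems have "poly_adj S u (hd p')"
      by (auto simp: hd_conv_nth)
    moreover have "walk S k (hd p') v"
      using Suc.prems p by (intro Suc.IH[of p']) auto
    ultimately show ?case by (rule walk.step)
  qed
qed

lemma walk_dist_eq_INF_walk: "walk_dist S u v = (INF k \<in> {k. walk S k u v}. enat k)"
  unfolding walk_dist_def walk_iff_list ..

lemma walk_dist_le_iff: "walk_dist S u v \<le> enat n \<longleftrightarrow> (\<exists>k\<le>n. walk S k u v)"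
proof
  assume "walk_dist S u v \<le> enat n"
  then obtain k where "walk S k u v" "enat k < enat (Suc n)"
    unfolding walk_dist_eq_INF_walk INF_le_iff by (metis Suc_ile_eq order_refl mem_Collect_eq)
  then show "\<exists>k\<le>n. walk S k u v" by (auto simp: less_Suc_eq_le)
next
  assume "\<exists>k\<le>n. walk S k u v"
  then show "walk_dist S u v \<le> enat n"
    unfolding walk_dist_eq_INF_walk by (auto intro: INF_lower2)
qed

lemma comb_diam_le_iff:
  "comb_diam S \<le> enat n \<longleftrightarrow>
     (\<forall>u\<in>poly_vertices S. \<forall>v\<in>poly_vertices S. \<exists>k\<le>n. walk S k u v)"
  unfolding comb_diam_def SUP_le_iff walk_dist_le_iff by auto

lemma walk_trans: "walk S k u v \<Longrightarrow> walk S l v w \<Longrightarrow> walk S (k + l) u w"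
  by (induction rule: walk.induct) (auto intro: walk.intros)

lemma walk_edge: "poly_adj S u v \<Longrightarrow> walk S 1 u v"
  using walk.step[OF _ walk.refl] by simp

lemma poly_adj_sym: "poly_adj S u v \<Longrightarrow> poly_adj S v u"
  unfolding poly_adj_def by (auto simp: closed_segment_commute)

lemma walk_sym: "walk S k u v \<Longrightarrow> walk S k v u"
proof (induction rule: walk.induct)
  case (step u v k w)
  then show ?case
    using walk_trans[OF _ walk_edge[OF poly_adj_sym]] by fastforce
qed (rule walk.refl)

lemma walk_mono:
  "walk S k u v \<Longrightarrow> (\<And>x y. poly_adj S x y \<Longrightarrow> poly_adj T x y) \<Longrightarrow> walk T k u v"
  by (induction rule: walk.induct) (auto intro: walk.intros)

lemma ex_walk_le_mono: "\<exists>k\<le>m. walk S k u v \<Longrightarrow> m \<le> n \<Longrightarrow> \<exists>k\<le>n. walk S k u v"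
  using order_trans by blast

lemma extreme_point_of_subset:
  "x extreme_point_of S \<Longrightarrow> x \<in> T \<Longrightarrow> T \<subseteq> S \<Longrightarrow> x extreme_point_of T"
  unfolding extreme_point_of_def by blast

lemma extreme_point_of_symmetric_imp_zero:
  assumes "x extreme_point_of S" "x + d \<in> S" "x - d \<in> S"
  shows "d = 0"
proof (rule ccontr)
  assume "d \<noteq> 0"
  have "x - d \<noteq> x + d"
  proof
    assume "x - d = x + d"
    then have "(x + d) - (x - d) = 0" by simp
    with \<open>d \<noteq> 0\<close> show False by (simp flip: scaleR_2)
  qed
  then have "midpoint (x - d) (x + d) \<in> open_segment (x - d) (x + d)" by simp
  moreover have "midpoint (x - d) (x + d) = x"
    by (simp add: midpoint_def algebra_simps flip: scaleR_2)
  ultimately show False using assms by (auto simp: extreme_point_of_def)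
qed

lemma extreme_point_of_Int_open:
  fixes S T :: "'a::real_normed_vector set"
  assumes "convex S" "open T" "x \<in> T" and ext: "x extreme_point_of (S \<inter> T)"
  shows "x extreme_point_of S"
proof -
  have xS: "x \<in> S" using ext by (simp add: extreme_point_of_def)
  have False if y: "y \<in> S" and z: "z \<in> S" and "x \<in> open_segment y z" for y z
  proof -
    obtain u where "y \<noteq> z" "0 < u" "u < 1" and x: "x = (1 - u) *\<^sub>R y + u *\<^sub>R z"
      using \<open>x \<in> open_segment y z\<close> by (auto simp: in_segment)
    define shrink where "shrink w \<epsilon> = x + \<epsilon> *\<^sub>R (w - x)" for w and \<epsilon> :: real
    have "((\<lambda>\<epsilon>. shrink w \<epsilon>) \<longlongrightarrow> x) (at_right 0)" for w
      unfolding shrink_def by (auto intro!: tendsto_eq_intros)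
    moreover have "\<forall>\<^sub>F \<epsilon> in at_right 0. \<epsilon> < (1::real)"
      by (rule eventually_at_rightI[of 0 1]) auto
    ultimately have "\<forall>\<^sub>F \<epsilon> in at_right 0. shrink y \<epsilon> \<in> T \<and> shrink z \<epsilon> \<in> T \<and> \<epsilon> < 1"
      using assms(2,3) by (intro eventually_conj topological_tendstoD)
    then obtain r where "0 < r"
      and small: "\<And>\<epsilon>. 0 < \<epsilon> \<Longrightarrow> \<epsilon> < r \<Longrightarrow> shrink y \<epsilon> \<in> T \<and> shrink z \<epsilon> \<in> T \<and> \<epsilon> < 1"
      by (auto simp: eventually_at_right_field)
    define \<epsilon> where "\<epsilon> = r / 2"
    have \<epsilon>: "0 < \<epsilon>" "\<epsilon> < 1" "shrink y \<epsilon> \<in> T" "shrink z \<epsilon> \<in> T"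
      using small[of \<epsilon>] \<open>0 < r\<close> by (auto simp: \<epsilon>_def)
    have "shrink w \<epsilon> \<in> S" if "w \<in> S" for w
      using convexD[OF \<open>convex S\<close> xS that, of "1 - \<epsilon>" \<epsilon>] \<epsilon> by (simp add: shrink_def algebra_simps)
    moreover have "x = (1 - u) *\<^sub>R shrink y \<epsilon> + u *\<^sub>R shrink z \<epsilon>"
      by (simp add: shrink_def x algebra_simps)
    moreover have "shrink y \<epsilon> \<noteq> shrink z \<epsilon>"
      using \<open>y \<noteq> z\<close> \<epsilon>(1) by (simp add: shrink_def)
    ultimately have "x \<in> open_segment (shrink y \<epsilon>) (shrink z \<epsilon>)"
      "shrink y \<epsilon> \<in> S \<inter> T" "shrink z \<epsilon> \<in> S \<inter> T"
      using \<open>0 < u\<close> \<open>u < 1\<close> y z \<epsilon> by (auto simp: in_segment)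
    with ext show False by (auto simp: extreme_point_of_def)
  qed
  with xS show ?thesis by (auto simp: extreme_point_of_def)
qed

lemma closed_segment_Int_halfspace_le:
  fixes x y :: "'a::real_inner"
  assumes "a \<bullet> x < c" "c \<le> a \<bullet> y"
  defines "\<theta> \<equiv> (c - a \<bullet> x) / (a \<bullet> y - a \<bullet> x)"
  shows "closed_segment x y \<inter> {z. a \<bullet> z \<le> c} = closed_segment x ((1 - \<theta>) *\<^sub>R x + \<theta> *\<^sub>R y)"
    (is "_ = closed_segment x ?q")
proof
  have \<theta>: "0 < \<theta>" "\<theta> \<le> 1" using assms by (auto simp: \<theta>_def field_simps)
  have "a \<bullet> ?q = a \<bullet> x + \<theta> * (a \<bullet> y - a \<bullet> x)" by (simp add: inner_add_right algebra_simps)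
  also have "\<dots> = c" using assms by (simp add: \<theta>_def)
  finally have "a \<bullet> ?q = c" .
  then have "closed_segment x ?q \<subseteq> {z. a \<bullet> z \<le> c}"
    using assms(1) by (intro closed_segment_subset convex_halfspace_le) auto
  moreover have "?q \<in> closed_segment x y" using \<theta> by (auto simp: in_segment intro!: exI[of _ \<theta>])
  ultimately show "closed_segment x ?q \<subseteq> closed_segment x y \<inter> {z. a \<bullet> z \<le> c}"
    by (auto simp: subset_closed_segment)
  show "closed_segment x y \<inter> {z. a \<bullet> z \<le> c} \<subseteq> closed_segment x ?q"
  proof
    fix p assume "p \<in> closed_segment x y \<inter> {z. a \<bullet> z \<le> c}"
    then obtain \<mu> where \<mu>: "0 \<le> \<mu>" "\<mu> \<le> 1" "p = (1 - \<mu>) *\<^sub>R x + \<mu> *\<^sub>R y"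
      and "a \<bullet> p \<le> c" by (auto simp: in_segment)
    have "a \<bullet> p = a \<bullet> x + \<mu> * (a \<bullet> y - a \<bullet> x)" by (simp add: \<mu>(3) inner_add_right algebra_simps)
    with \<open>a \<bullet> p \<le> c\<close> have "a \<bullet> x + \<mu> * (a \<bullet> y - a \<bullet> x) \<le> c" by simp
    then have "\<mu> \<le> \<theta>" using assms by (simp add: \<theta>_def field_simps)
    moreover have "p = (1 - \<mu> / \<theta>) *\<^sub>R x + (\<mu> / \<theta>) *\<^sub>R ?q"
      using \<theta> by (simp add: \<mu>(3) algebra_simps)
    ultimately show "p \<in> closed_segment x ?q"
      using \<theta> \<mu> unfolding in_segment by (intro exI[of _ "\<mu> / \<theta>"]) (auto simp: field_simps)
  qed
qed

lemma comb_diam_injective_affine_image_le: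
  assumes "linear h" "inj h"
  shows "comb_diam ((\<lambda>x. c + h x) ` S) \<le> comb_diam S"
proof -
  define g where "g x = c + h x" for x
  have "inj g" using assms(2) by (simp add: g_def inj_def)
  have g_image: "g ` X = (+) c ` h ` X" for X by (auto simp: g_def)
  have face: "g ` T face_of g ` S \<longleftrightarrow> T face_of S" for T
    by (simp add: g_image face_of_linear_image[OF assms])
  have vertices: "poly_vertices (g ` S) = g ` poly_vertices S"
  proof -
    have "g u extreme_point_of g ` S \<longleftrightarrow> u extreme_point_of S" for u
      using face[of "{u}"] by (simp add: face_of_singleton)
    moreover have "x \<in> g ` S" if "x extreme_point_of g ` S" for x
      using that by (simp add: extreme_point_of_def)
    ultimately show ?thesis by (force simp: poly_vertices_def)
  qed
  have "closed_segment (g u) (g v) = g ` closed_segment u v" for u v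
    by (simp add: g_def closed_segment_translation closed_segment_linear_image[OF assms(1)] image_image)
  then have adj: "poly_adj (g ` S) (g u) (g v)" if "poly_adj S u v" for u v
    using that face vertices \<open>inj g\<close> by (auto simp: poly_adj_def inj_eq)
  have walk_image: "walk (g ` S) k (g u) (g v)" if "walk S k u v" for k u v
    using that by induction (auto intro: walk.intros adj)
  have "walk_dist (g ` S) (g u) (g v) \<le> walk_dist S u v" for u v
    unfolding walk_dist_eq_INF_walk by (rule INF_mono) (auto intro: walk_image)
  then show ?thesis
    unfolding comb_diam_def g_def[symmetric] vertices by (intro SUP_mono) (auto; blast)
qed

(* For S = {x. A x = c_A, x >= 0}, lower is P_{\bar A} with the slack eliminated and slice is P. *)
locale convex_cut =
  fixes S :: "'a::euclidean_space set" and a :: 'a and c :: real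
  assumes convex_S: "convex S"
begin

definition lower :: "'a set" where "lower = S \<inter> {x. a \<bullet> x \<le> c}"

definition slice :: "'a set" where "slice = S \<inter> {x. a \<bullet> x = c}"

lemma convex_lower: "convex lower"
  unfolding lower_def by (intro convex_Int convex_S convex_halfspace_le)

lemma slice_face_of_lower: "slice face_of lower"
proof -
  have "slice = lower \<inter> {x. a \<bullet> x = c}" by (auto simp: slice_def lower_def)
  also have "\<dots> face_of lower"
    by (rule face_of_Int_supporting_hyperplane_le[OF convex_lower]) (simp add: lower_def)
  finally show ?thesis .
qed

lemma vertex_slice_iff: "x \<in> poly_vertices slice \<longleftrightarrow> x \<in> poly_vertices lower \<and> a \<bullet> x = c"
  using extreme_point_of_face[OF slice_face_of_lower]
  by (auto simp: poly_vertices_def slice_def lower_def extreme_point_of_def)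

lemma vertex_lower_of_vertex: "x \<in> poly_vertices S \<Longrightarrow> a \<bullet> x \<le> c \<Longrightarrow> x \<in> poly_vertices lower"
  unfolding poly_vertices_def lower_def
  by (auto intro: extreme_point_of_subset simp: extreme_point_of_def)

lemma vertex_of_vertex_lower:
  assumes "x \<in> poly_vertices lower" "a \<bullet> x < c"
  shows "x \<in> poly_vertices S"
proof -
  have "x extreme_point_of lower" using assms(1) by (simp add: poly_vertices_def)
  moreover have "x \<in> S \<inter> {x. a \<bullet> x < c}"
    using calculation assms(2) by (auto simp: extreme_point_of_def lower_def)
  moreover have "S \<inter> {x. a \<bullet> x < c} \<subseteq> lower" by (auto simp: lower_def)
  ultimately have "x extreme_point_of (S \<inter> {x. a \<bullet> x < c})"
    by (rule extreme_point_of_subset)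
  then show ?thesis
    using extreme_point_of_Int_open[OF convex_S open_halfspace_lt] assms(2)
    by (simp add: poly_vertices_def)
qed

lemma vertex_lower_cases:
  assumes "x \<in> poly_vertices lower"
  shows "a \<bullet> x < c \<or> x \<in> poly_vertices slice"
proof -
  have "a \<bullet> x \<le> c" using assms by (auto simp: poly_vertices_def extreme_point_of_def lower_def)
  with assms show ?thesis by (auto simp: vertex_slice_iff)
qed

lemma poly_adj_lower_of_slice: "poly_adj slice x y \<Longrightarrow> poly_adj lower x y"
  unfolding poly_adj_def using vertex_slice_iff face_of_trans[OF _ slice_face_of_lower] by blast

lemma walk_lower_of_slice: "walk slice k x y \<Longrightarrow> walk lower k x y"
  using walk_mono poly_adj_lower_of_slice by blast

lemma poly_adj_lower:
  assumes "poly_adj S x y" "a \<bullet> x \<le> c" "a \<bullet> y \<le> c"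
  shows "poly_adj lower x y"
proof -
  have "closed_segment x y \<subseteq> {z. a \<bullet> z \<le> c}"
    using assms(2,3) by (intro closed_segment_subset convex_halfspace_le) auto
  then have "closed_segment x y \<subseteq> lower"
    using assms(1) face_of_imp_subset by (auto simp: poly_adj_def lower_def)
  then have "closed_segment x y face_of lower"
    using assms(1) by (auto simp: poly_adj_def lower_def intro: face_of_subset)
  with assms show ?thesis by (auto simp: poly_adj_def vertex_lower_of_vertex)
qed

lemma exists_slice_neighbour_of_leaving_edge:
  assumes adj: "poly_adj S x y" and "a \<bullet> x < c" "c \<le> a \<bullet> y"
  shows "\<exists>q \<in> poly_vertices slice. poly_adj lower x q"
proof -
  define \<theta> where "\<theta> = (c - a \<bullet> x) / (a \<bullet> y - a \<bullet> x)"
  define q where "q = (1 - \<theta>) *\<^sub>R x + \<theta> *\<^sub>R y"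
  have "a \<bullet> q = a \<bullet> x + \<theta> * (a \<bullet> y - a \<bullet> x)" by (simp add: q_def inner_add_right algebra_simps)
  then have aq: "a \<bullet> q = c" using assms by (simp add: \<theta>_def)
  have "closed_segment x y \<inter> {z. a \<bullet> z \<le> c} face_of lower"
    using adj unfolding poly_adj_def lower_def
    by (auto intro: face_of_Int_Int face_of_refl convex_halfspace_le)
  then have face: "closed_segment x q face_of lower"
    using closed_segment_Int_halfspace_le[OF assms(2,3)] by (simp add: q_def \<theta>_def)
  then have q: "q \<in> poly_vertices lower"
    using extreme_point_of_face[OF face, of q] extreme_point_of_segment[of q x q]
    by (simp add: poly_vertices_def)
  moreover have "x \<in> poly_vertices lower"
    using adj assms(2) by (auto simp: poly_adj_def vertex_lower_of_vertex)
  moreover have "x \<noteq> q" using aq assms(2) by auto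
  ultimately have "poly_adj lower x q" using face by (simp add: poly_adj_def)
  moreover have "q \<in> poly_vertices slice" using q aq by (simp add: vertex_slice_iff)
  ultimately show ?thesis by blast
qed

lemma walk_to_slice:
  "walk S k x y \<Longrightarrow> a \<bullet> x < c \<Longrightarrow> c \<le> a \<bullet> y \<Longrightarrow>
     \<exists>q \<in> poly_vertices slice. \<exists>k'\<le>k. walk lower k' x q"
proof (induction rule: walk.induct)
  case (step x z k y)
  show ?case
  proof (cases "a \<bullet> z < c")
    case True
    with step obtain q k' where "q \<in> poly_vertices slice" "k' \<le> k" "walk lower k' z q" by blast
    moreover have "poly_adj lower x z" using poly_adj_lower step True by auto
    ultimately show ?thesis by (auto intro: walk.step)
  next
    case False
    then show ?thesis using exists_slice_neighbour_of_leaving_edge step walk_edge by fastforce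
  qed
qed simp

lemma walk_below_or_via_slice:
  "walk S k x y \<Longrightarrow> a \<bullet> x < c \<Longrightarrow> a \<bullet> y < c \<Longrightarrow>
     walk lower k x y \<or>
     (\<exists>q1 \<in> poly_vertices slice. \<exists>q2 \<in> poly_vertices slice. \<exists>k1 k2.
        k1 + k2 \<le> k \<and> walk lower k1 x q1 \<and> walk lower k2 q2 y)"
proof (induction rule: walk.induct)
  case (step x z k y)
  show ?case
  proof (cases "a \<bullet> z < c")
    case True
    then have adj: "poly_adj lower x z" using poly_adj_lower step by auto
    from step.IH[OF True step.prems(2)] show ?thesis
    proof (elim disjE bexE exE conjE)
      assume "walk lower k z y"
      then show ?thesis using adj by (auto intro: walk.step)
    next
      fix q1 q2 k1 k2
      assume "q1 \<in> poly_vertices slice" "q2 \<in> poly_vertices slice" "k1 + k2 \<le> k"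
        "walk lower k1 z q1" "walk lower k2 q2 y"
      moreover have "Suc k1 + k2 \<le> Suc k" "walk lower (Suc k1) x q1"
        using \<open>k1 + k2 \<le> k\<close> walk.step[OF adj \<open>walk lower k1 z q1\<close>] by auto
      ultimately show ?thesis by blast
    qed
  next
    case False
    then obtain q1 where "q1 \<in> poly_vertices slice" "poly_adj lower x q1"
      using exists_slice_neighbour_of_leaving_edge[OF step.hyps(1) step.prems(1)] by auto
    moreover obtain q2 k2 where "q2 \<in> poly_vertices slice" "k2 \<le> k" "walk lower k2 q2 y"
      using walk_to_slice[OF walk_sym[OF step.hyps(2)]] step False by (auto intro: walk_sym)
    ultimately show ?thesis using walk_edge by fastforce
  qed
qed (simp add: walk.refl)

lemma walk_lower_both_below:
  assumes "comb_diam S \<le> enat DS" "comb_diam slice \<le> enat DP"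
    and u: "u \<in> poly_vertices lower" "a \<bullet> u < c" and v: "v \<in> poly_vertices lower" "a \<bullet> v < c"
  shows "\<exists>k \<le> DS + DP. walk lower k u v"
proof -
  have "u \<in> poly_vertices S" "v \<in> poly_vertices S" using u v vertex_of_vertex_lower by auto
  then obtain k where k: "k \<le> DS" "walk S k u v"
    using assms(1) unfolding comb_diam_le_iff by blast
  from walk_below_or_via_slice[OF k(2) u(2) v(2)] show ?thesis
  proof (elim disjE bexE exE conjE)
    assume "walk lower k u v"
    with k(1) show ?thesis by (intro exI[of _ k]) simp
  next
    fix q1 q2 k1 k2
    assume q: "q1 \<in> poly_vertices slice" "q2 \<in> poly_vertices slice"
      and walks: "k1 + k2 \<le> k" "walk lower k1 u q1" "walk lower k2 q2 v"
    obtain k3 where "k3 \<le> DP" "walk slice k3 q1 q2"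
      using assms(2) q by (auto simp: comb_diam_le_iff)
    then have "walk lower (k1 + k3 + k2) u v"
      using walks walk_trans walk_lower_of_slice by blast
    with \<open>k3 \<le> DP\<close> walks(1) k(1) show ?thesis by (intro exI[of _ "k1 + k3 + k2"]) auto
  qed
qed

lemma walk_lower_via_vertex_beyond:
  assumes "comb_diam S \<le> enat DS" "comb_diam slice \<le> enat DP"
    and u: "u \<in> poly_vertices lower" "a \<bullet> u < c" and v: "v \<in> poly_vertices slice"
    and w: "w \<in> poly_vertices S" "c \<le> a \<bullet> w"
  shows "\<exists>k \<le> DS + DP. walk lower k u v"
proof -
  have "u \<in> poly_vertices S" using u vertex_of_vertex_lower by auto
  then obtain k where k: "k \<le> DS" "walk S k u w"
    using assms(1) w(1) unfolding comb_diam_le_iff by blast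
  obtain q k1 where q: "q \<in> poly_vertices slice" "k1 \<le> k" "walk lower k1 u q"
    using walk_to_slice[OF k(2) u(2) w(2)] by blast
  obtain k2 where "k2 \<le> DP" "walk slice k2 q v"
    using assms(2) q(1) v by (auto simp: comb_diam_le_iff)
  then have "walk lower (k1 + k2) u v" using q(3) walk_trans walk_lower_of_slice by blast
  with q(2) k(1) \<open>k2 \<le> DP\<close> show ?thesis by (intro exI[of _ "k1 + k2"]) auto
qed

lemma walk_lower_via_neighbour_below:
  assumes "comb_diam S \<le> enat DS" "comb_diam slice \<le> enat DP"
    and u: "u \<in> poly_vertices lower" "a \<bullet> u < c" and v: "v \<in> poly_vertices slice"
    and w: "w \<in> poly_vertices S" "a \<bullet> w < c" "poly_adj lower w v"
  shows "\<exists>k \<le> DS + DP + 1. walk lower k u v"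
proof -
  have "u \<in> poly_vertices S" using u vertex_of_vertex_lower by auto
  then obtain k where k: "k \<le> DS" "walk S k u w"
    using assms(1) w(1) unfolding comb_diam_le_iff by blast
  from walk_below_or_via_slice[OF k(2) u(2) w(2)] show ?thesis
  proof (elim disjE bexE exE conjE)
    assume "walk lower k u w"
    then have "walk lower (k + 1) u v" using walk_trans walk_edge[OF w(3)] by blast
    with k(1) show ?thesis by (intro exI[of _ "k + 1"]) simp
  next
    fix q1 q2 k1 k2
    assume "q1 \<in> poly_vertices slice" "k1 + k2 \<le> k" "walk lower k1 u q1"
    moreover obtain k3 where "k3 \<le> DP" "walk slice k3 q1 v"
      using assms(2) \<open>q1 \<in> poly_vertices slice\<close> v unfolding comb_diam_le_iff by blast
    ultimately have "walk lower (k1 + k3) u v" "k1 + k3 \<le> DS + DP + 1"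
      using k(1) walk_trans walk_lower_of_slice by (blast, linarith)
    then show ?thesis by blast
  qed
qed

end

definition std_poly :: "real^'n^'m \<Rightarrow> real^'m \<Rightarrow> (real^'n) set" where
  "std_poly A b = {x. A *v x = b \<and> (\<forall>i. 0 \<le> x $ i)}"

definition support_kernel :: "real^'n^'m \<Rightarrow> real^'n \<Rightarrow> (real^'n) set" where
  "support_kernel A v = {f. A *v f = 0 \<and> (\<forall>i. v $ i = 0 \<longrightarrow> f $ i = 0)}"

lemma convex_std_poly: "convex (std_poly A b)"
  unfolding std_poly_def convex_def
  by (auto simp: matrix_vector_right_distrib matrix_vector_mult_scaleR simp flip: scaleR_add_left)

lemma comb_diam_std_poly_le_mat_diam: "comb_diam (std_poly A b) \<le> mat_diam A"
  unfolding mat_diam_def std_poly_def by (rule SUP_upper) simp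

lemma subspace_support_kernel: "subspace (support_kernel A v)"
  unfolding subspace_def support_kernel_def
  by (auto simp: matrix_vector_right_distrib matrix_vector_mult_scaleR)

lemma support_kernel_antimono:
  "(\<And>i. v $ i = 0 \<Longrightarrow> w $ i = 0) \<Longrightarrow> support_kernel A w \<subseteq> support_kernel A v"
  unfolding support_kernel_def by auto

lemma nonneg_open_segment_coordinate_zero:
  fixes p q x :: "real^'n"
  assumes "\<forall>i. 0 \<le> p $ i" "\<forall>i. 0 \<le> q $ i" "x \<in> open_segment p q" "x $ i = 0"
  shows "p $ i = 0"
proof -
  obtain u where u: "0 < u" "u < 1" "x = (1 - u) *\<^sub>R p + u *\<^sub>R q"
    using assms(3) by (auto simp: in_segment)
  then have "(1 - u) * p $ i + u * q $ i = 0" using assms(4) by simp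
  moreover have "0 \<le> (1 - u) * p $ i" "0 \<le> u * q $ i" using u assms(1,2) by auto
  ultimately show ?thesis using u by (simp add: add_nonneg_eq_0_iff)
qed

lemma open_segment_diff_in_support_kernel:
  assumes p: "p \<in> std_poly A b" and q: "q \<in> std_poly A b" and x: "x \<in> open_segment p q"
  shows "p - x \<in> support_kernel A x"
proof -
  have "x \<in> std_poly A b"
    using closed_segment_subset[OF p q convex_std_poly] open_closed_segment[OF x] by blast
  moreover have "p $ i = 0" if "x $ i = 0" for i
    using nonneg_open_segment_coordinate_zero[OF _ _ x that] p q by (simp add: std_poly_def)
  ultimately show ?thesis
    using p by (simp add: support_kernel_def std_poly_def matrix_vector_mult_diff_distrib)
qed

lemma support_kernel_perturbation:
  assumes v: "v \<in> std_poly A b" and f: "f \<in> support_kernel A v"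
  obtains \<epsilon> where "0 < \<epsilon>" "v + \<epsilon> *\<^sub>R f \<in> std_poly A b" "v - \<epsilon> *\<^sub>R f \<in> std_poly A b"
proof -
  define I where "I = {i. f $ i \<noteq> 0}"
  define \<epsilon> where "\<epsilon> = Min (insert 1 ((\<lambda>i. v $ i / \<bar>f $ i\<bar>) ` I))"
  have pos: "0 < v $ i" if "i \<in> I" for i
    using that v f by (force simp: I_def std_poly_def support_kernel_def less_le)
  then have "0 < \<epsilon>" by (auto simp: \<epsilon>_def I_def)
  have bound: "\<bar>\<epsilon> * f $ i\<bar> \<le> v $ i" for i
  proof (cases "i \<in> I")
    case True
    then have "\<epsilon> \<le> v $ i / \<bar>f $ i\<bar>" by (simp add: \<epsilon>_def)
    with True \<open>0 < \<epsilon>\<close> show ?thesis by (simp add: I_def abs_mult pos_le_divide_eq)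
  next
    case False
    with v show ?thesis by (simp add: I_def std_poly_def)
  qed
  have "v + s *\<^sub>R f \<in> std_poly A b" if "\<bar>s\<bar> = \<epsilon>" for s
  proof -
    have "0 \<le> v $ i + s * f $ i" for i
    proof -
      have "\<bar>s * f $ i\<bar> \<le> v $ i" using bound[of i] that by (simp add: abs_mult)
      then show ?thesis using abs_ge_minus_self[of "s * f $ i"] by linarith
    qed
    then show ?thesis
      using v f by (simp add: std_poly_def support_kernel_def matrix_vector_right_distrib
          matrix_vector_mult_scaleR)
  qed
  from this[of \<epsilon>] this[of "- \<epsilon>"] \<open>0 < \<epsilon>\<close> show thesis by (intro that) auto
qed

lemma extreme_point_of_std_poly_iff:
  assumes v: "v \<in> std_poly A b"
  shows "v extreme_point_of std_poly A b \<longleftrightarrow> support_kernel A v = {0}"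
proof
  assume ext: "v extreme_point_of std_poly A b"
  have "f = 0" if f: "f \<in> support_kernel A v" for f
  proof -
    obtain \<epsilon> where "0 < \<epsilon>" "v + \<epsilon> *\<^sub>R f \<in> std_poly A b" "v - \<epsilon> *\<^sub>R f \<in> std_poly A b"
      using support_kernel_perturbation[OF v f] .
    then have "\<epsilon> *\<^sub>R f = 0" using extreme_point_of_symmetric_imp_zero[OF ext] by blast
    with \<open>0 < \<epsilon>\<close> show "f = 0" by simp
  qed
  then show "support_kernel A v = {0}"
    using subspace_0[OF subspace_support_kernel] by blast
next
  assume kernel: "support_kernel A v = {0}"
  have "v \<notin> open_segment p q" if "p \<in> std_poly A b" "q \<in> std_poly A b" for p q
  proof
    assume "v \<in> open_segment p q"
    with open_segment_diff_in_support_kernel[OF that this] kernel have "p = v" by simp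
    with \<open>v \<in> open_segment p q\<close> show False by (simp add: open_segment_def)
  qed
  with v show "v extreme_point_of std_poly A b" by (simp add: extreme_point_of_def)
qed

lemma std_poly_ratio_test:
  assumes v: "v \<in> std_poly A b" and e: "e \<in> support_kernel A v" and "e $ j0 < 0"
  obtains t j where "0 < t" "e $ j < 0" "v $ j + t * e $ j = 0" "v + t *\<^sub>R e \<in> std_poly A b"
proof -
  define N where "N = {i. e $ i < 0}"
  have pos: "0 < v $ i" if "i \<in> N" for i
    using that v e by (force simp: N_def std_poly_def support_kernel_def less_le)
  define t where "t = Min ((\<lambda>i. - v $ i / e $ i) ` N)"
  have "N \<noteq> {}" using \<open>e $ j0 < 0\<close> by (auto simp: N_def)
  then have "t \<in> (\<lambda>i. - v $ i / e $ i) ` N" unfolding t_def by (intro Min_in) auto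
  then obtain j where j: "j \<in> N" "t = - v $ j / e $ j" by blast
  moreover have "e $ j < 0" using j(1) by (simp add: N_def)
  ultimately have "0 < t" "e $ j < 0" "v $ j + t * e $ j = 0"
    using pos[OF j(1)] by (auto simp: divide_pos_neg)
  moreover have "0 \<le> v $ i + t * e $ i" for i
  proof (cases "i \<in> N")
    case True
    then have "t \<le> - v $ i / e $ i" unfolding t_def by (intro Min_le) auto
    with True have "- v $ i / e $ i * e $ i \<le> t * e $ i"
      by (intro mult_right_mono_neg) (auto simp: N_def)
    with True show ?thesis by (simp add: N_def)
  next
    case False
    with v \<open>0 < t\<close> show ?thesis by (simp add: N_def std_poly_def not_less)
  qed
  then have "v + t *\<^sub>R e \<in> std_poly A b"
    using v e by (simp add: std_poly_def support_kernel_def matrix_vector_right_distrib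
        matrix_vector_mult_scaleR)
  ultimately show thesis by (rule that)
qed

lemma extreme_point_along_edge_direction:
  assumes v: "v \<in> std_poly A b" and e: "e \<in> support_kernel A v" and "e $ j0 < 0"
    and line: "\<forall>f \<in> support_kernel A v. \<exists>l. f = l *\<^sub>R e"
  obtains t where "0 < t" "(v + t *\<^sub>R e) extreme_point_of std_poly A b"
    "\<And>\<tau>. v + \<tau> *\<^sub>R e \<in> std_poly A b \<Longrightarrow> \<tau> \<le> t"
proof -
  obtain t j where t: "0 < t" "e $ j < 0" "v $ j + t * e $ j = 0" "v + t *\<^sub>R e \<in> std_poly A b"
    using std_poly_ratio_test[OF v e \<open>e $ j0 < 0\<close>] .
  let ?w = "v + t *\<^sub>R e"
  have "f = 0" if f: "f \<in> support_kernel A ?w" for f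
  proof -
    have "support_kernel A ?w \<subseteq> support_kernel A v"
      using e by (intro support_kernel_antimono) (simp add: support_kernel_def)
    with f line obtain l where "f = l *\<^sub>R e" by blast
    moreover have "f $ j = 0" using f t(3) by (simp add: support_kernel_def)
    ultimately show "f = 0" using t(2) by simp
  qed
  then have "support_kernel A ?w = {0}"
    using subspace_0[OF subspace_support_kernel] by blast
  then have "?w extreme_point_of std_poly A b"
    using extreme_point_of_std_poly_iff[OF t(4)] by simp
  moreover have "\<tau> \<le> t" if "v + \<tau> *\<^sub>R e \<in> std_poly A b" for \<tau>
  proof (rule ccontr)
    assume "\<not> \<tau> \<le> t"
    then have "v $ j + \<tau> * e $ j < v $ j + t * e $ j" using t(2) by (simp add: mult_strict_right_mono_neg)
    with t(3) that show False by (auto simp: std_poly_def not_le[symmetric])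
  qed
  ultimately show thesis using t(1) that by blast
qed

locale std_cut =
  fixes A :: "real^'n^'m" and b :: "real^'m" and a :: "real^'n" and c :: real

sublocale std_cut \<subseteq> convex_cut "std_poly A b" a c
  by unfold_locales (rule convex_std_poly)

context std_cut
begin

lemma support_kernel_orthogonal_eq_0:
  assumes ext: "v extreme_point_of lower" and "a \<bullet> v = c"
    and f: "f \<in> support_kernel A v" "a \<bullet> f = 0"
  shows "f = 0"
proof -
  have "v \<in> std_poly A b" using ext by (simp add: extreme_point_of_def lower_def)
  then obtain \<epsilon> where "0 < \<epsilon>" "v + \<epsilon> *\<^sub>R f \<in> std_poly A b" "v - \<epsilon> *\<^sub>R f \<in> std_poly A b"
    using support_kernel_perturbation f(1) by blast
  moreover have "a \<bullet> (v + \<epsilon> *\<^sub>R f) = c" "a \<bullet> (v - \<epsilon> *\<^sub>R f) = c"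
    using \<open>a \<bullet> v = c\<close> f(2) by (simp_all add: inner_add_right inner_diff_right)
  ultimately have "v + \<epsilon> *\<^sub>R f \<in> lower" "v - \<epsilon> *\<^sub>R f \<in> lower"
    by (simp_all add: lower_def)
  then have "\<epsilon> *\<^sub>R f = 0" using extreme_point_of_symmetric_imp_zero[OF ext] by blast
  with \<open>0 < \<epsilon>\<close> show ?thesis by simp
qed

lemma support_kernel_line:
  assumes ext: "v extreme_point_of lower" and "a \<bullet> v = c"
    and "\<not> v extreme_point_of std_poly A b"
  obtains d where "d \<in> support_kernel A v" "a \<bullet> d < 0" "\<forall>f \<in> support_kernel A v. \<exists>l. f = l *\<^sub>R d"
proof -
  let ?K = "support_kernel A v"
  have "v \<in> std_poly A b" using ext by (simp add: extreme_point_of_def lower_def)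
  with assms(3) obtain d0 where d0: "d0 \<in> ?K" "d0 \<noteq> 0"
    using extreme_point_of_std_poly_iff subspace_0[OF subspace_support_kernel] by blast
  then have "a \<bullet> d0 \<noteq> 0" using support_kernel_orthogonal_eq_0[OF ext \<open>a \<bullet> v = c\<close>] by blast
  define d where "d = (if a \<bullet> d0 < 0 then d0 else - d0)"
  have d: "d \<in> ?K" "a \<bullet> d < 0"
    using d0 \<open>a \<bullet> d0 \<noteq> 0\<close> subspace_neg[OF subspace_support_kernel] by (auto simp: d_def)
  have "\<exists>l. f = l *\<^sub>R d" if f: "f \<in> ?K" for f
  proof -
    let ?l = "(a \<bullet> f) / (a \<bullet> d)"
    have "f - ?l *\<^sub>R d \<in> ?K"
      using subspace_support_kernel f d(1) by (intro subspace_diff subspace_scale)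
    moreover have "a \<bullet> (f - ?l *\<^sub>R d) = 0" using d(2) by (simp add: inner_diff_right)
    ultimately have "f - ?l *\<^sub>R d = 0" by (rule support_kernel_orthogonal_eq_0[OF ext \<open>a \<bullet> v = c\<close>])
    then show ?thesis by auto
  qed
  with d show thesis by (intro that) auto
qed

lemma closed_segment_face_of_lower:
  assumes v: "v \<in> std_poly A b" "a \<bullet> v = c"
    and d: "d \<in> support_kernel A v" "a \<bullet> d < 0" and line: "\<forall>f \<in> support_kernel A v. \<exists>l. f = l *\<^sub>R d"
    and t: "0 < t" "v + t *\<^sub>R d \<in> std_poly A b"
    and max: "\<And>\<tau>. v + \<tau> *\<^sub>R d \<in> std_poly A b \<Longrightarrow> \<tau> \<le> t"
  shows "closed_segment v (v + t *\<^sub>R d) face_of lower"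
proof -
  let ?w = "v + t *\<^sub>R d"
  have on_segment: "v + \<tau> *\<^sub>R d \<in> closed_segment v ?w" if "0 \<le> \<tau>" "\<tau> \<le> t" for \<tau>
  proof -
    have "v + \<tau> *\<^sub>R d = (1 - \<tau> / t) *\<^sub>R v + (\<tau> / t) *\<^sub>R ?w"
      using t(1) by (simp add: algebra_simps)
    with that t(1) show ?thesis by (auto simp: in_segment intro!: exI[of _ "\<tau> / t"])
  qed
  have "a \<bullet> ?w < c" using v(2) d(2) t(1) by (simp add: inner_add_right mult_pos_neg)
  then have sub: "closed_segment v ?w \<subseteq> lower"
    using v t(2) convex_lower by (intro closed_segment_subset) (auto simp: lower_def)
  have "p \<in> closed_segment v ?w"
    if p: "p \<in> lower" and q: "q \<in> lower" and x: "x \<in> closed_segment v ?w" "x \<in> open_segment p q"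
    for p q x
  proof -
    obtain \<sigma> where \<sigma>: "x = v + \<sigma> *\<^sub>R d"
      using x(1) by (auto simp: in_segment algebra_simps intro: exI[of _ "u * t" for u])
    have "support_kernel A x \<subseteq> support_kernel A v"
      using d(1) by (intro support_kernel_antimono) (simp add: \<sigma> support_kernel_def)
    moreover have "p - x \<in> support_kernel A x"
      using p q x(2) by (intro open_segment_diff_in_support_kernel) (auto simp: lower_def)
    ultimately obtain l where "p - x = l *\<^sub>R d" using line by blast
    then have p_eq: "p = v + (\<sigma> + l) *\<^sub>R d" by (simp add: \<sigma> algebra_simps eq_diff_eq)
    have "c + (\<sigma> + l) * (a \<bullet> d) \<le> c"
      using p v(2) by (simp add: p_eq lower_def inner_add_right)
    then have "0 \<le> \<sigma> + l" using d(2) by (simp add: mult_le_0_iff)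
    moreover have "\<sigma> + l \<le> t" using p max by (simp add: p_eq lower_def)
    ultimately show ?thesis by (simp add: p_eq on_segment)
  qed
  with sub show ?thesis
    unfolding face_of_def by (metis convex_closed_segment open_segment_commute)
qed

lemma adjacent_vertex_below_along_edge:
  assumes ext: "v extreme_point_of lower" and av: "a \<bullet> v = c"
    and d: "d \<in> support_kernel A v" "a \<bullet> d < 0" and line: "\<forall>f \<in> support_kernel A v. \<exists>l. f = l *\<^sub>R d"
    and "d $ j < 0"
  obtains w where "w \<in> poly_vertices (std_poly A b)" "a \<bullet> w < c" "poly_adj lower w v"
proof -
  have v: "v \<in> std_poly A b" using ext by (simp add: extreme_point_of_def lower_def)
  obtain t where t: "0 < t" "(v + t *\<^sub>R d) extreme_point_of std_poly A b"
    and max: "\<And>\<tau>. v + \<tau> *\<^sub>R d \<in> std_poly A b \<Longrightarrow> \<tau> \<le> t"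
    using extreme_point_along_edge_direction[OF v d(1) \<open>d $ j < 0\<close> line] by blast
  let ?w = "v + t *\<^sub>R d"
  have "a \<bullet> ?w < c" using av d(2) t(1) by (simp add: inner_add_right mult_pos_neg)
  have "closed_segment v ?w face_of lower"
    using t max by (intro closed_segment_face_of_lower[OF v av d line]) (auto simp: extreme_point_of_def)
  moreover have "?w \<in> poly_vertices lower"
    using t(2) \<open>a \<bullet> ?w < c\<close> by (intro vertex_lower_of_vertex) (auto simp: poly_vertices_def)
  moreover have "?w \<noteq> v" using t(1) d(2) by auto
  ultimately have "poly_adj lower ?w v"
    using ext by (simp add: poly_adj_def poly_vertices_def closed_segment_commute)
  with t(2) \<open>a \<bullet> ?w < c\<close> show thesis by (intro that) (simp_all add: poly_vertices_def)
qed

lemma vertex_beyond_along_edge: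
  assumes v: "v \<in> std_poly A b" and av: "a \<bullet> v = c"
    and d: "d \<in> support_kernel A v" "a \<bullet> d < 0" and line: "\<forall>f \<in> support_kernel A v. \<exists>l. f = l *\<^sub>R d"
    and nonneg: "\<And>j. 0 \<le> d $ j"
  obtains w where "w \<in> poly_vertices (std_poly A b)" "c < a \<bullet> w"
proof -
  have "d \<noteq> 0" using d(2) by auto
  then obtain j where "d $ j \<noteq> 0" by (auto simp: vec_eq_iff)
  with nonneg[of j] have "(- d) $ j < 0" by simp
  have line': "\<forall>f \<in> support_kernel A v. \<exists>l. f = l *\<^sub>R (- d)"
  proof
    fix f assume "f \<in> support_kernel A v"
    with line obtain l where "f = l *\<^sub>R d" by blast
    then show "\<exists>l. f = l *\<^sub>R (- d)" by (intro exI[of _ "- l"]) simp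
  qed
  obtain t where t: "0 < t" "(v + t *\<^sub>R (- d)) extreme_point_of std_poly A b"
    using extreme_point_along_edge_direction[OF v subspace_neg[OF subspace_support_kernel d(1)]
        \<open>(- d) $ j < 0\<close> line'] by blast
  moreover have "c < a \<bullet> (v + t *\<^sub>R (- d))"
    using av d(2) t(1) by (simp add: inner_diff_right mult_pos_neg)
  ultimately show thesis by (intro that) (simp_all add: poly_vertices_def)
qed

(* The line through v in direction d meets std_poly A b in an edge or a ray with v in its
   relative interior, and w is an endpoint of it. *)
lemma non_vertex_slice_vertex_cases:
  assumes ext: "v extreme_point_of lower" and av: "a \<bullet> v = c"
    and not_ext: "\<not> v extreme_point_of std_poly A b"
  obtains w where "w \<in> poly_vertices (std_poly A b)" "c < a \<bullet> w"
    | w where "w \<in> poly_vertices (std_poly A b)" "a \<bullet> w < c" "poly_adj lower w v"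
proof -
  have v: "v \<in> std_poly A b" using ext by (simp add: extreme_point_of_def lower_def)
  obtain d where d: "d \<in> support_kernel A v" "a \<bullet> d < 0"
    and line: "\<forall>f \<in> support_kernel A v. \<exists>l. f = l *\<^sub>R d"
    using support_kernel_line[OF ext av not_ext] .
  show thesis
  proof (cases "\<exists>j. d $ j < 0")
    case True
    then obtain j where "d $ j < 0" ..
    with adjacent_vertex_below_along_edge[OF ext av d line] that(2) show thesis by blast
  next
    case False
    then have "0 \<le> d $ j" for j by (simp add: not_less)
    with vertex_beyond_along_edge[OF v av d line] that(1) show thesis by blast
  qed
qed

lemma walk_lower_below_to_slice:
  assumes DS: "comb_diam (std_poly A b) \<le> enat DS" and DP: "comb_diam slice \<le> enat DP"
    and u: "u \<in> poly_vertices lower" "a \<bullet> u < c" and v: "v \<in> poly_vertices slice"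
  shows "\<exists>k \<le> DS + DP + 1. walk lower k u v"
proof -
  have ext: "v extreme_point_of lower" and av: "a \<bullet> v = c"
    using v unfolding vertex_slice_iff by (simp_all add: poly_vertices_def)
  show ?thesis
  proof (cases "v extreme_point_of std_poly A b")
    case True
    then have "v \<in> poly_vertices (std_poly A b)" by (simp add: poly_vertices_def)
    then show ?thesis
      by (rule ex_walk_le_mono[OF walk_lower_via_vertex_beyond[OF DS DP u v _ eq_refl[OF av[symmetric]]]])
        simp
  next
    case False
    with ext av show ?thesis
    proof (cases rule: non_vertex_slice_vertex_cases)
      case (1 w)
      show ?thesis
        by (rule ex_walk_le_mono[OF walk_lower_via_vertex_beyond[OF DS DP u v 1(1) less_imp_le[OF 1(2)]]])
          simp
    next
      case (2 w)
      then show ?thesis by (rule walk_lower_via_neighbour_below[OF DS DP u v])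
    qed
  qed
qed

lemma walk_lower_bound:
  assumes DS: "comb_diam (std_poly A b) \<le> enat DS" and DP: "comb_diam slice \<le> enat DP"
    and u: "u \<in> poly_vertices lower" and v: "v \<in> poly_vertices lower"
  shows "\<exists>k \<le> DS + DP + 1. walk lower k u v"
proof -
  consider "a \<bullet> u < c" "a \<bullet> v < c" | "a \<bullet> u < c" "v \<in> poly_vertices slice"
    | "u \<in> poly_vertices slice" "a \<bullet> v < c" | "u \<in> poly_vertices slice" "v \<in> poly_vertices slice"
    using vertex_lower_cases[OF u] vertex_lower_cases[OF v] by blast
  then show ?thesis
  proof cases
    case 1
    show ?thesis by (rule ex_walk_le_mono[OF walk_lower_both_below[OF DS DP u(1) 1(1) v(1) 1(2)]]) simp
  next
    case 2
    then show ?thesis using walk_lower_below_to_slice[OF DS DP u(1)] by simp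
  next
    case 3
    then obtain k where "k \<le> DS + DP + 1" "walk lower k v u"
      using walk_lower_below_to_slice[OF DS DP v(1)] by auto
    then show ?thesis using walk_sym by blast
  next
    case 4
    then obtain k where "k \<le> DP" "walk slice k u v" using DP unfolding comb_diam_le_iff by blast
    then show ?thesis by (intro exI[of _ k]) (auto intro: walk_lower_of_slice)
  qed
qed

lemma comb_diam_lower_le: "comb_diam lower \<le> comb_diam (std_poly A b) + comb_diam slice + 1"
proof (cases "comb_diam (std_poly A b) = \<infinity> \<or> comb_diam slice = \<infinity>")
  case False
  then obtain DS DP where DS: "comb_diam (std_poly A b) = enat DS" and DP: "comb_diam slice = enat DP"
    by (auto simp: not_infinity_eq)
  then have "comb_diam lower \<le> enat (DS + DP + 1)"
    unfolding comb_diam_le_iff using walk_lower_bound[of DS DP] DS DP by simp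
  then show ?thesis by (simp add: DS DP one_enat_def)
qed auto

lemma comb_diam_slack_le:
  "comb_diam {(x, s). A *v x = b \<and> a \<bullet> x + s = c \<and> (\<forall>i. 0 \<le> x $ i) \<and> 0 \<le> s}
     \<le> comb_diam lower"
proof -
  define h where "h x = (x, - (a \<bullet> x))" for x :: "real^'n"
  have "linear h" by (auto simp: h_def inner_add_right intro!: linearI)
  moreover have "inj h" by (simp add: h_def inj_def)
  moreover have "{(x, s). A *v x = b \<and> a \<bullet> x + s = c \<and> (\<forall>i. 0 \<le> x $ i) \<and> 0 \<le> s}
      = (\<lambda>x. (0, c) + h x) ` lower" (is "?P = _")
  proof (rule set_eqI)
    fix p :: "(real^'n) \<times> real"
    obtain x s where "p = (x, s)" by (cases p)
    then show "p \<in> ?P \<longleftrightarrow> p \<in> (\<lambda>x. (0, c) + h x) ` lower"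
      unfolding lower_def unfolding std_poly_def by (auto simp: h_def image_iff algebra_simps)
  qed
  ultimately show ?thesis by (simp add: comb_diam_injective_affine_image_le)
qed

end

theorem theorem2:
  fixes A :: "real^'n^'m" and a :: "real^'n" and cA :: "real^'m" and ca :: real
  shows "comb_diam {(x :: real^'n, s :: real). A *v x = cA \<and> a \<bullet> x + s = ca
                     \<and> (\<forall>i. 0 \<le> x $ i) \<and> 0 \<le> s}
         \<le> mat_diam A
            + comb_diam {x :: real^'n. A *v x = cA \<and> a \<bullet> x = ca \<and> (\<forall>i. 0 \<le> x $ i)} + 2"
proof -
  interpret std_cut A cA a ca .
  note comb_diam_slack_le
  also note comb_diam_lower_le
  also have "comb_diam (std_poly A cA) + comb_diam slice + 1 \<le> mat_diam A + comb_diam slice + 2"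
    using comb_diam_std_poly_le_mat_diam by (intro add_mono) (simp_all add: one_le_numeral)
  also have "slice = {x. A *v x = cA \<and> a \<bullet> x = ca \<and> (\<forall>i. 0 \<le> x $ i)}"
    unfolding slice_def unfolding std_poly_def by auto
  finally show ?thesis .
qed

end
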